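(* Grant (Lip-Conv), (Conv) and (Bern-ERM), let $\theta=1/(2A)$, and consider the event $$\Omega=\Big\{\forall f\in F\text{ with }\|f-f^*\|_{L_2}\le r_2(\theta):\ |(P-P_N)\mathcal L_f|\le\theta r_2^2(\theta)\Big\}.$$ On $\Omega$, any $\hat f^{ERM}\in\operatorname{argmin}_{f\in F}P_N\ell_f$ satisfies $\|\hat f^{ERM}-f^*\|_{L_2}\le r_2(\theta)$ and $P\mathcal L_{\hat f^{ERM}}\le\theta r_2^2(\theta)$.
   Context: Setting: $\bar{\mathcal Y}\subset\mathbb R$ convex, $F\subset L_2(\mu)$ a class of measurable functions $\mathcal X\to\bar{\mathcal Y}$, $\ell_f(x,y)=\bar\ell(f(x),y)$, $(X,Y)\sim P$, $X\sim\mu$, $Pg=\mathbb Eg(X,Y)$; $f^*$ is the unique minimizer of $f\mapsto P\ell_f$ over $F$, $\mathcal L_f=\ell_f-\ell_{f^*}$, $\|g\|_{L_2}=(\mathbb Eg(X)^2)^{1/2}$. Data $(X_i,Y_i)_{i=1}^N$, $P_Ng=\frac1N\sum_{i=1}^Ng(X_i,Y_i)$. (Lip-Conv): there is $L>0$ with $u\mapsto\bar\ell(u,y)$ convex and $L$-Lipschitz for every $y$. (Conv): $F$ convex. $r_2(\theta)$ is a given positive number (the complexity parameter, $r_2(\theta)\ge\inf\{r>0:32L\,w((F-f^* )\cap rB_{L_2})\le\theta r^2\sqrt N\}$, $w$ the Gaussian mean width). (Bern-ERM): there is $A>0$ such that every $f\in F$ with $\|f-f^*\|_{L_2}=r_2(1/(2A))$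 satisfies $\|f-f^*\|_{L_2}^2\le AP\mathcal L_f$. *)

theory Defs
  imports "HOL-Probability.Probability"
begin

definition Pexp :: "('x \<times> real) measure \<Rightarrow> ('x \<times> real \<Rightarrow> real) \<Rightarrow> real" where
  "Pexp P g = integral\<^sup>L P g"

definition PN :: "nat \<Rightarrow> (nat \<Rightarrow> 'x \<times> real) \<Rightarrow> ('x \<times> real \<Rightarrow> real) \<Rightarrow> real" where
  "PN N Z g = (\<Sum>i<N. g (Z i)) / real N"

definition loss :: "(real \<Rightarrow> real \<Rightarrow> real) \<Rightarrow> ('x \<Rightarrow> real) \<Rightarrow> 'x \<times> real \<Rightarrow> real" where
  "loss lb f z = lb (f (fst z)) (snd z)"

definition excess_loss :: "(real \<Rightarrow> real \<Rightarrow> real) \<Rightarrow> ('x \<Rightarrow> real) \<Rightarrow> ('x \<Rightarrow> real) \<Rightarrow> 'x \<times> real \<Rightarrow> real" where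
  "excess_loss lb fs f z = loss lb f z - loss lb fs z"

definition L2norm :: "('x \<times> real) measure \<Rightarrow> ('x \<Rightarrow> real) \<Rightarrow> real" where
  "L2norm P g = sqrt (integral\<^sup>L P (\<lambda>z. (g (fst z))\<^sup>2))"

end

theory Submission
  imports Defs
begin

text \<open>If the empirical minimiser \<open>fhat\<close> were farther than \<open>r\<close> from \<open>f*\<close>, the point of the segment
  \<open>[f*, fhat]\<close> at distance exactly \<open>r\<close> would still have non-positive empirical excess risk, by
  convexity of the class and of the loss. On that sphere, however, the Bernstein condition gives
  excess risk at least \<open>r\<^sup>2/A = 2\<theta>r\<^sup>2\<close>, and on \<open>\<Omega>\<close> the empirical excess risk then exceeds
  \<open>\<theta>r\<^sup>2 > 0\<close>. Hence \<open>fhat\<close> lies in the ball, where \<open>\<Omega>\<close> and \<open>P\<^sub>N\<L>\<^sub>fhat \<le> 0\<close> bound its excess risk.\<close>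

lemma PN_diff: "PN N Z (\<lambda>z. g z - h z) = PN N Z g - PN N Z h"
  unfolding PN_def by (simp add: sum_subtractf diff_divide_distrib)

lemma PN_mult: "PN N Z (\<lambda>z. c * g z) = c * PN N Z g"
  unfolding PN_def by (simp add: sum_distrib_left)

lemma PN_mono:
  assumes "\<And>z. g z \<le> h z"
  shows "PN N Z g \<le> PN N Z h"
  unfolding PN_def by (intro divide_right_mono sum_mono assms) simp

lemma PN_excess_loss: "PN N Z (excess_loss lb fs f) = PN N Z (loss lb f) - PN N Z (loss lb fs)"
  unfolding excess_loss_def by (rule PN_diff)

lemma L2norm_mult: "L2norm P (\<lambda>x. c * h x) = \<bar>c\<bar> * L2norm P h"
  unfolding L2norm_def by (simp add: power_mult_distrib real_sqrt_mult)

lemma excess_loss_convex_combination_le: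
  assumes "\<forall>y. convex_on Ybar (\<lambda>u. lb u y)" "fs x \<in> Ybar" "g x \<in> Ybar" "0 \<le> t" "t \<le> 1"
  shows "excess_loss lb fs (\<lambda>x. (1 - t) * fs x + t * g x) (x, y) \<le> t * excess_loss lb fs g (x, y)"
proof -
  have "lb ((1 - t) * fs x + t * g x) y \<le> (1 - t) * lb (fs x) y + t * lb (g x) y"
    using convex_onD[OF assms(1)[rule_format, of y] assms(4,5,2,3)] by simp
  then show ?thesis by (simp add: excess_loss_def loss_def algebra_simps)
qed

lemma sphere_point_with_nonpos_empirical_excess_loss:
  assumes conv: "\<forall>f\<in>F. \<forall>g\<in>F. \<forall>t::real. 0 \<le> t \<and> t \<le> 1 \<longrightarrow> (\<lambda>x. (1 - t) * f x + t * g x) \<in> F"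
    and range: "\<forall>f\<in>F. \<forall>x. f x \<in> Ybar"
    and loss_convex: "\<forall>y. convex_on Ybar (\<lambda>u. lb u y)"
    and fs: "fs \<in> F" and g: "g \<in> F"
    and empirical: "PN N Z (excess_loss lb fs g) \<le> 0"
    and r: "0 < r" "r \<le> L2norm P (\<lambda>x. g x - fs x)"
  obtains f where "f \<in> F" "L2norm P (\<lambda>x. f x - fs x) = r" "PN N Z (excess_loss lb fs f) \<le> 0"
proof
  define t where "t = r / L2norm P (\<lambda>x. g x - fs x)"
  have t: "0 \<le> t" "t \<le> 1"
    using r by (auto simp: t_def)
  define f where "f = (\<lambda>x. (1 - t) * fs x + t * g x)"
  show "f \<in> F"
    using conv fs g t by (simp add: f_def)
  have "(\<lambda>x. f x - fs x) = (\<lambda>x. t * (g x - fs x))"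
    by (auto simp: f_def algebra_simps)
  then have "L2norm P (\<lambda>x. f x - fs x) = t * L2norm P (\<lambda>x. g x - fs x)"
    using t by (simp add: L2norm_mult)
  then show "L2norm P (\<lambda>x. f x - fs x) = r"
    using r by (simp add: t_def)
  have "excess_loss lb fs f z \<le> t * excess_loss lb fs g z" for z
    using excess_loss_convex_combination_le[OF loss_convex, of fs "fst z" g t "snd z"] range fs g t
    by (simp add: f_def)
  then have "PN N Z (excess_loss lb fs f) \<le> PN N Z (\<lambda>z. t * excess_loss lb fs g z)"
    by (rule PN_mono)
  also have "\<dots> \<le> 0"
    using t empirical by (simp add: PN_mult mult_nonneg_nonpos)
  finally show "PN N Z (excess_loss lb fs f) \<le> 0" .
qed

theorem proposition3:
  fixes P :: "('x \<times> real) measure"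
    and F :: "('x \<Rightarrow> real) set"
    and Ybar :: "real set"
    and lb :: "real \<Rightarrow> real \<Rightarrow> real"
    and fs :: "'x \<Rightarrow> real"
    and L A :: real
    and r2 :: "real \<Rightarrow> real"
    and N :: nat
    and Z :: "nat \<Rightarrow> 'x \<times> real"
    and fhat :: "'x \<Rightarrow> real"
    and \<theta> :: real
  assumes prob: "prob_space P"
    and Ybar_convex: "convex Ybar"
    and F_range: "\<forall>f\<in>F. \<forall>x. f x \<in> Ybar"
    and F_meas: "\<forall>f\<in>F. (\<lambda>z. f (fst z)) \<in> borel_measurable P"
    and F_L2: "\<forall>f\<in>F. integrable P (\<lambda>z. (f (fst z))\<^sup>2)"
    and loss_int: "\<forall>f\<in>F. integrable P (loss lb f)"
    and fs_in: "fs \<in> F"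
    and fs_min: "\<forall>f\<in>F. Pexp P (loss lb fs) \<le> Pexp P (loss lb f)"
    and fs_unique: "\<forall>f\<in>F. Pexp P (loss lb f) \<le> Pexp P (loss lb fs) \<longrightarrow> f = fs"
    and LipConv_L: "L > 0"
    and LipConv_convex: "\<forall>y. convex_on Ybar (\<lambda>u. lb u y)"
    and LipConv_lip: "\<forall>y. \<forall>u\<in>Ybar. \<forall>v\<in>Ybar. \<bar>lb u y - lb v y\<bar> \<le> L * \<bar>u - v\<bar>"
    and Conv: "\<forall>f\<in>F. \<forall>g\<in>F. \<forall>t::real. 0 \<le> t \<and> t \<le> 1 \<longrightarrow> (\<lambda>x. (1 - t) * f x + t * g x) \<in> F"
    and r2_pos: "\<forall>t. r2 t > 0"
    and A_pos: "A > 0"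
    and Bern_ERM: "\<forall>f\<in>F. L2norm P (\<lambda>x. f x - fs x) = r2 (1 / (2 * A)) \<longrightarrow>
                    (L2norm P (\<lambda>x. f x - fs x))\<^sup>2 \<le> A * Pexp P (excess_loss lb fs f)"
    and theta_def: "\<theta> = 1 / (2 * A)"
    and N_pos: "N > 0"
    and Omega: "\<forall>f\<in>F. L2norm P (\<lambda>x. f x - fs x) \<le> r2 \<theta> \<longrightarrow>
                 \<bar>Pexp P (excess_loss lb fs f) - PN N Z (excess_loss lb fs f)\<bar> \<le> \<theta> * (r2 \<theta>)\<^sup>2"
    and fhat_in: "fhat \<in> F"
    and fhat_ERM: "\<forall>f\<in>F. PN N Z (loss lb fhat) \<le> PN N Z (loss lb f)"
  shows "L2norm P (\<lambda>x. fhat x - fs x) \<le> r2 \<theta> \<and> Pexp P (excess_loss lb fs fhat) \<le> \<theta> * (r2 \<theta>)\<^sup>2"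
proof -
  define r where "r = r2 \<theta>"
  have r_pos: "r > 0" and \<theta>_pos: "\<theta> > 0"
    using r2_pos A_pos by (auto simp: r_def theta_def)
  have fhat_empirical: "PN N Z (excess_loss lb fs fhat) \<le> 0"
    using fhat_ERM fs_in by (simp add: PN_excess_loss)
  have in_ball: "L2norm P (\<lambda>x. fhat x - fs x) \<le> r"
  proof (rule ccontr)
    assume "\<not> ?thesis"
    then have "r \<le> L2norm P (\<lambda>x. fhat x - fs x)"
      by simp
    then obtain f where f: "f \<in> F" "L2norm P (\<lambda>x. f x - fs x) = r" "PN N Z (excess_loss lb fs f) \<le> 0"
      by (rule sphere_point_with_nonpos_empirical_excess_loss[OF Conv F_range LipConv_convex fs_in fhat_in
          fhat_empirical r_pos])
    have "r\<^sup>2 \<le> A * Pexp P (excess_loss lb fs f)"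
      using Bern_ERM f by (simp add: r_def theta_def)
    then have "2 * \<theta> * r\<^sup>2 \<le> Pexp P (excess_loss lb fs f)"
      using A_pos by (simp add: theta_def pos_divide_le_eq mult.commute)
    moreover have "\<bar>Pexp P (excess_loss lb fs f) - PN N Z (excess_loss lb fs f)\<bar> \<le> \<theta> * r\<^sup>2"
      using Omega f by (simp add: r_def)
    moreover have "\<theta> * r\<^sup>2 > 0"
      using \<theta>_pos r_pos by simp
    ultimately show False
      using f(3) by linarith
  qed
  then have "\<bar>Pexp P (excess_loss lb fs fhat) - PN N Z (excess_loss lb fs fhat)\<bar> \<le> \<theta> * r\<^sup>2"
    using Omega fhat_in by (simp add: r_def)
  then show ?thesis
    using in_ball fhat_empirical by (auto simp: r_def)
qed

end
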